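(* Let $X$ be a real normed linear space and let $x\in X\setminus\{\theta\}$ be $\varepsilon$-smooth with $\varepsilon\in[0,2)$. Suppose $y_1,y_2\in X$ satisfy $\min\{\|y_1\|,\|y_2\|\}\le\left\|\frac{y_1+y_2}{2}\right\|$. If $x\perp_B y_1$ and $x\perp_B y_2$, then $x\perp_B^{\varepsilon/2}(y_1+y_2)$.
   Context: $x\perp_B y$ means $\|x+\lambda y\|\ge\|x\|$ for all $\lambda\in\mathbb{R}$. For $\delta\in[0,1)$, $x\perp_B^\delta y$ means $\|x+\lambda y\|^2\ge\|x\|^2-2\delta\|x\|\|\lambda y\|$ for all $\lambda\in\mathbb{R}$. For $x\neq\theta$, $J(x)=\{f\in S_{X^*}:f(x)=\|x\|\}$, and $x$ is $\varepsilon$-smooth if $\sup_{f,g\in J(x)}\|f-g\|\le\varepsilon$. *)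

theory Defs
  imports "HOL-Analysis.Analysis"
begin

definition bj_orth :: "'a::real_normed_vector \<Rightarrow> 'a \<Rightarrow> bool" where
  "bj_orth x y \<longleftrightarrow> (\<forall>t::real. norm (x + t *\<^sub>R y) \<ge> norm x)"

definition bj_orth_approx :: "real \<Rightarrow> 'a::real_normed_vector \<Rightarrow> 'a \<Rightarrow> bool" where
  "bj_orth_approx \<delta> x y \<longleftrightarrow>
     (\<forall>t::real. (norm (x + t *\<^sub>R y))\<^sup>2 \<ge> (norm x)\<^sup>2 - 2 * \<delta> * norm x * norm (t *\<^sub>R y))"

definition supp_funcs :: "'a::real_normed_vector \<Rightarrow> ('a \<Rightarrow>\<^sub>L real) set" where
  "supp_funcs x = {f. norm f = 1 \<and> blinfun_apply f x = norm x}"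

definition eps_smooth :: "real \<Rightarrow> 'a::real_normed_vector \<Rightarrow> bool" where
  "eps_smooth \<epsilon> x \<longleftrightarrow> (\<forall>f\<in>supp_funcs x. \<forall>g\<in>supp_funcs x. norm (f - g) \<le> \<epsilon>)"

end

theory Submission
  imports Defs
begin

(* By James's theorem, Birkhoff-James orthogonality x \<perp> y1 and x \<perp> y2 is witnessed by
   supporting functionals f, g at x with f y1 = 0 and g y2 = 0; these come from Hahn-Banach,
   extending a x + b y \<mapsto> a \<parallel>x\<parallel> with norm at most 1.  If \<parallel>y1\<parallel> \<le> \<parallel>(y1 + y2)/2\<parallel>, then
   |g (y1 + y2)| = |(g - f) y1| \<le> \<epsilon> \<parallel>y1\<parallel> \<le> (\<epsilon>/2) \<parallel>y1 + y2\<parallel> by \<epsilon>-smoothness.  Finally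
   \<parallel>x + t y\<parallel> \<ge> g (x + t y) \<ge> \<parallel>x\<parallel> - (\<epsilon>/2) \<parallel>t y\<parallel> for y = y1 + y2, and squaring gives
   approximate orthogonality. *)

(* The graph of a linear functional on a subspace, dominated by the norm.  In this relational
   form, one-dimensional extensions and unions of chains are plain set operations. *)
definition norm_dominated_graph :: "('a::real_normed_vector \<times> real) set \<Rightarrow> bool" where
  "norm_dominated_graph G \<longleftrightarrow>
     (\<forall>v a w b. (v, a) \<in> G \<longrightarrow> (w, b) \<in> G \<longrightarrow> (v + w, a + b) \<in> G) \<and>
     (\<forall>v a c. (v, a) \<in> G \<longrightarrow> (c *\<^sub>R v, c * a) \<in> G) \<and>
     (\<forall>v a. (v, a) \<in> G \<longrightarrow> a \<le> norm v)"

lemma norm_dominated_graphD: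
  assumes "norm_dominated_graph G"
  shows norm_dominated_graph_add: "(v, a) \<in> G \<Longrightarrow> (w, b) \<in> G \<Longrightarrow> (v + w, a + b) \<in> G"
    and norm_dominated_graph_scaleR: "(v, a) \<in> G \<Longrightarrow> (c *\<^sub>R v, c * a) \<in> G"
    and norm_dominated_graph_le_norm: "(v, a) \<in> G \<Longrightarrow> a \<le> norm v"
  using assms unfolding norm_dominated_graph_def by blast+

lemma norm_dominated_graph_unique:
  assumes G: "norm_dominated_graph G" and "(v, a) \<in> G" "(v, b) \<in> G"
  shows "a = b"
proof -
  have "(v + (-1) *\<^sub>R v, a + (-1) * b) \<in> G" "(v + (-1) *\<^sub>R v, b + (-1) * a) \<in> G"
    using assms by (blast intro: norm_dominated_graph_add norm_dominated_graph_scaleR)+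
  then have "a - b \<le> 0" "b - a \<le> 0"
    using norm_dominated_graph_le_norm[OF G] by fastforce+
  then show ?thesis by simp
qed

lemma norm_dominated_graph_Union_chain:
  assumes "\<And>G. G \<in> C \<Longrightarrow> norm_dominated_graph G"
    and "\<And>G H. G \<in> C \<Longrightarrow> H \<in> C \<Longrightarrow> G \<subseteq> H \<or> H \<subseteq> G"
  shows "norm_dominated_graph (\<Union>C)"
  unfolding norm_dominated_graph_def
proof (intro conjI allI impI)
  fix v a w b assume "(v, a) \<in> \<Union>C" "(w, b) \<in> \<Union>C"
  then obtain K where "K \<in> C" "(v, a) \<in> K" "(w, b) \<in> K"
    using assms(2) by blast
  with assms(1) show "(v + w, a + b) \<in> \<Union>C"
    by (blast intro: norm_dominated_graph_add)
qed (use assms(1) norm_dominated_graphD in blast)+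

(* Where the one-dimensional extension G + span {z} may send z: between the two bounds coming
   from the triangle inequality, which are compatible by sublinearity of the norm. *)
lemma norm_dominated_graph_extension_value:
  assumes G: "norm_dominated_graph G" and "(0, 0) \<in> G"
  obtains c where "\<And>v a. (v, a) \<in> G \<Longrightarrow> a - norm (v - z) \<le> c"
    and "\<And>v a. (v, a) \<in> G \<Longrightarrow> c \<le> norm (v + z) - a"
proof -
  define S where "S = {a - norm (v - z) | v a. (v, a) \<in> G}"
  have compatible: "a - norm (v - z) \<le> norm (w + z) - b" if "(v, a) \<in> G" "(w, b) \<in> G" for v a w b
  proof -
    have "a + b \<le> norm (v + w)"
      using that by (blast intro: norm_dominated_graph_le_norm[OF G] norm_dominated_graph_add[OF G])
    also have "\<dots> \<le> norm (v - z) + norm (w + z)"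
      using norm_triangle_ineq[of "v - z" "w + z"] by simp
    finally show ?thesis by simp
  qed
  have "S \<noteq> {}" using \<open>(0, 0) \<in> G\<close> S_def by blast
  moreover have "bdd_above S"
    unfolding S_def bdd_above_def using compatible[OF _ \<open>(0, 0) \<in> G\<close>] by force
  ultimately show ?thesis
    using that[of "Sup S"] compatible by (auto intro!: cSup_upper cSup_least simp: S_def)
qed

lemma norm_dominated_graph_extension_le_norm:
  assumes G: "norm_dominated_graph G" and va: "(v, a) \<in> G"
    and lower: "\<And>v a. (v, a) \<in> G \<Longrightarrow> a - norm (v - z) \<le> c"
    and upper: "\<And>v a. (v, a) \<in> G \<Longrightarrow> c \<le> norm (v + z) - a"
  shows "a + t * c \<le> norm (v + t *\<^sub>R z)"
proof (cases t "0::real" rule: linorder_cases)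
  case less
  define s where "s = - t"
  have "s > 0" using less s_def by simp
  have "(1/s) * a - norm ((1/s) *\<^sub>R v - z) \<le> c"
    using lower norm_dominated_graph_scaleR[OF G va] by blast
  then have "s * ((1/s) * a - norm ((1/s) *\<^sub>R v - z)) \<le> s * c"
    using \<open>s > 0\<close> by (simp add: mult_left_mono)
  then have "a - norm (s *\<^sub>R ((1/s) *\<^sub>R v - z)) \<le> s * c"
    using \<open>s > 0\<close> by (simp add: right_diff_distrib)
  also have "s *\<^sub>R ((1/s) *\<^sub>R v - z) = v + t *\<^sub>R z"
    using \<open>s > 0\<close> s_def by (simp add: scaleR_diff_right)
  finally show ?thesis using s_def by simp
next
  case equal
  then show ?thesis using norm_dominated_graph_le_norm[OF G va] by simp
next
  case greater
  have "c \<le> norm ((1/t) *\<^sub>R v + z) - (1/t) * a"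
    using upper norm_dominated_graph_scaleR[OF G va] by blast
  then have "t * c \<le> t * (norm ((1/t) *\<^sub>R v + z) - (1/t) * a)"
    using greater by simp
  also have "\<dots> = norm (t *\<^sub>R ((1/t) *\<^sub>R v + z)) - a"
    using greater by (simp add: right_diff_distrib)
  also have "t *\<^sub>R ((1/t) *\<^sub>R v + z) = v + t *\<^sub>R z"
    using greater by (simp add: scaleR_add_right)
  finally show ?thesis by simp
qed

lemma norm_dominated_graph_extend:
  assumes G: "norm_dominated_graph G" and "(0, 0) \<in> G"
  obtains G' where "norm_dominated_graph G'" "G \<subseteq> G'" "z \<in> fst ` G'"
proof -
  obtain c where lower: "\<And>v a. (v, a) \<in> G \<Longrightarrow> a - norm (v - z) \<le> c"
    and upper: "\<And>v a. (v, a) \<in> G \<Longrightarrow> c \<le> norm (v + z) - a"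
    using norm_dominated_graph_extension_value[OF assms] by metis
  define G' where "G' = {(v + t *\<^sub>R z, a + t * c) | v a t. (v, a) \<in> G}"
  have "G \<subseteq> G'"
  proof
    fix p assume "p \<in> G"
    moreover have "(v + 0 *\<^sub>R z, a + 0 * c) \<in> G'" if "(v, a) \<in> G" for v a
      unfolding G'_def using that by blast
    ultimately show "p \<in> G'" by (cases p) simp
  qed
  moreover have "(0 + 1 *\<^sub>R z, 0 + 1 * c) \<in> G'"
    unfolding G'_def using \<open>(0, 0) \<in> G\<close> by blast
  then have "z \<in> fst ` G'" by force
  moreover have "norm_dominated_graph G'"
    unfolding norm_dominated_graph_def
  proof (intro conjI allI impI)
    fix v a w b assume "(v, a) \<in> G'" "(w, b) \<in> G'"
    then obtain v1 a1 t1 v2 a2 t2 where h: "(v1, a1) \<in> G" "(v2, a2) \<in> G"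
      "v = v1 + t1 *\<^sub>R z" "a = a1 + t1 * c" "w = v2 + t2 *\<^sub>R z" "b = a2 + t2 * c"
      unfolding G'_def by blast
    have "v + w = (v1 + v2) + (t1 + t2) *\<^sub>R z" "a + b = (a1 + a2) + (t1 + t2) * c"
      using h by (auto simp: algebra_simps)
    with norm_dominated_graph_add[OF G h(1,2)] show "(v + w, a + b) \<in> G'"
      unfolding G'_def by blast
  next
    fix v a and r :: real assume "(v, a) \<in> G'"
    then obtain v1 a1 t1 where h: "(v1, a1) \<in> G" "v = v1 + t1 *\<^sub>R z" "a = a1 + t1 * c"
      unfolding G'_def by blast
    have "r *\<^sub>R v = r *\<^sub>R v1 + (r * t1) *\<^sub>R z" "r * a = r * a1 + (r * t1) * c"
      using h by (auto simp: algebra_simps)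
    with norm_dominated_graph_scaleR[OF G h(1)] show "(r *\<^sub>R v, r * a) \<in> G'"
      unfolding G'_def by blast
  next
    fix v a assume "(v, a) \<in> G'"
    then show "a \<le> norm v"
      unfolding G'_def using norm_dominated_graph_extension_le_norm[OF G _ lower upper] by blast
  qed
  ultimately show ?thesis using that by blast
qed

lemma norm_dominated_graph_total_blinfun:
  assumes G: "norm_dominated_graph G" and total: "\<And>v. \<exists>a. (v, a) \<in> G"
  obtains f :: "'a::real_normed_vector \<Rightarrow>\<^sub>L real"
  where "norm f \<le> 1" "\<And>v a. (v, a) \<in> G \<Longrightarrow> blinfun_apply f v = a"
proof -
  define g where "g v = (SOME a. (v, a) \<in> G)" for v
  have g_graph: "(v, g v) \<in> G" for v
    unfolding g_def using total by (rule someI_ex)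
  have g_eq: "g v = a" if "(v, a) \<in> G" for v a
    using norm_dominated_graph_unique[OF G g_graph that] .
  have g_add: "g (v + w) = g v + g w" for v w
    by (intro g_eq norm_dominated_graph_add[OF G] g_graph)
  have g_scaleR: "g (r *\<^sub>R v) = r * g v" for r v
    by (intro g_eq norm_dominated_graph_scaleR[OF G] g_graph)
  have g_le: "g v \<le> norm v" for v
    using norm_dominated_graph_le_norm[OF G g_graph] .
  have g_abs: "\<bar>g v\<bar> \<le> norm v" for v
    using g_le[of v] g_le[of "(-1) *\<^sub>R v"] g_scaleR[of "-1" v] by simp
  have "bounded_linear g"
    by (rule bounded_linear_intro[where K = 1]) (use g_add g_scaleR g_abs in auto)
  then have apply_g: "blinfun_apply (Blinfun g) = g"
    by (rule bounded_linear_Blinfun_apply)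
  have "norm (Blinfun g) \<le> 1"
    by (rule norm_blinfun_bound) (use apply_g g_abs in auto)
  with that show ?thesis using apply_g g_eq by metis
qed

lemma norm_dominated_graph_hahn_banach:
  fixes G0 :: "('a::real_normed_vector \<times> real) set"
  assumes G0: "norm_dominated_graph G0" and "G0 \<noteq> {}"
  obtains f :: "'a \<Rightarrow>\<^sub>L real" where "norm f \<le> 1" "\<And>v a. (v, a) \<in> G0 \<Longrightarrow> blinfun_apply f v = a"
proof -
  define \<A> where "\<A> = {G. norm_dominated_graph G \<and> G0 \<subseteq> G}"
  have "\<exists>M\<in>\<A>. \<forall>G\<in>\<A>. M \<subseteq> G \<longrightarrow> G = M"
  proof (rule subset_Zorn_nonempty)
    show "\<A> \<noteq> {}" using G0 \<A>_def by blast
  next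
    fix C assume C: "C \<noteq> {}" "subset.chain \<A> C"
    have members: "\<And>G. G \<in> C \<Longrightarrow> norm_dominated_graph G \<and> G0 \<subseteq> G"
      using C(2) unfolding \<A>_def subset.chain_def by blast
    have comparable: "\<And>G H. G \<in> C \<Longrightarrow> H \<in> C \<Longrightarrow> G \<subseteq> H \<or> H \<subseteq> G"
      using C(2) unfolding subset.chain_def by blast
    have "norm_dominated_graph (\<Union>C)"
      using conjunct1[OF members] comparable by (rule norm_dominated_graph_Union_chain)
    moreover have "G0 \<subseteq> \<Union>C" using members C(1) by blast
    ultimately show "\<Union>C \<in> \<A>" unfolding \<A>_def by blast
  qed
  then obtain M where "M \<in> \<A>" and maximal_in: "\<And>G. G \<in> \<A> \<Longrightarrow> M \<subseteq> G \<Longrightarrow> G = M"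
    by blast
  then have M: "norm_dominated_graph M" "G0 \<subseteq> M" unfolding \<A>_def by auto
  have maximal: "G = M" if "norm_dominated_graph G" "M \<subseteq> G" for G
    using maximal_in[of G] that M(2) unfolding \<A>_def by blast
  obtain v a where "(v, a) \<in> G0" using \<open>G0 \<noteq> {}\<close> by auto
  then have "(0 *\<^sub>R v, 0 * a) \<in> M"
    using M(2) by (intro norm_dominated_graph_scaleR[OF M(1)]) blast
  then have "(0, 0) \<in> M" by simp
  have total: "\<exists>a. (z, a) \<in> M" for z
  proof -
    obtain G' where "norm_dominated_graph G'" "M \<subseteq> G'" "z \<in> fst ` G'"
      using norm_dominated_graph_extend[OF M(1) \<open>(0, 0) \<in> M\<close>] .
    then show ?thesis using maximal by force
  qed
  obtain f :: "'a \<Rightarrow>\<^sub>L real" where "norm f \<le> 1" and f_M: "\<And>v a. (v, a) \<in> M \<Longrightarrow> blinfun_apply f v = a"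
    using norm_dominated_graph_total_blinfun[OF M(1) total] by blast
  show ?thesis
    by (rule that[OF \<open>norm f \<le> 1\<close>]) (use f_M M(2) in blast)
qed

lemma bj_orth_scaleR_le_norm:
  assumes "bj_orth x y"
  shows "\<bar>a\<bar> * norm x \<le> norm (a *\<^sub>R x + b *\<^sub>R y)"
proof (cases "a = 0")
  case False
  have "norm x \<le> norm (x + (b / a) *\<^sub>R y)"
    using assms unfolding bj_orth_def by blast
  then have "\<bar>a\<bar> * norm x \<le> norm (a *\<^sub>R (x + (b / a) *\<^sub>R y))"
    by (simp add: mult_left_mono)
  also have "a *\<^sub>R (x + (b / a) *\<^sub>R y) = a *\<^sub>R x + b *\<^sub>R y"
    using False by (simp add: scaleR_add_right)
  finally show ?thesis .
qed simp

lemma bj_orth_supporting_functional: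
  fixes x y :: "'a::real_normed_vector"
  assumes "x \<noteq> 0" and "bj_orth x y"
  obtains f where "f \<in> supp_funcs x" "blinfun_apply f y = 0"
proof -
  define G0 where "G0 = {(a *\<^sub>R x + b *\<^sub>R y, a * norm x) | a b. True}"
  have "norm_dominated_graph G0"
    unfolding norm_dominated_graph_def
  proof (intro conjI allI impI)
    fix v a w b assume "(v, a) \<in> G0" "(w, b) \<in> G0"
    then obtain a1 b1 a2 b2 where "v = a1 *\<^sub>R x + b1 *\<^sub>R y" "a = a1 * norm x"
      "w = a2 *\<^sub>R x + b2 *\<^sub>R y" "b = a2 * norm x"
      unfolding G0_def by blast
    moreover have "((a1 + a2) *\<^sub>R x + (b1 + b2) *\<^sub>R y, (a1 + a2) * norm x) \<in> G0"
      unfolding G0_def by blast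
    ultimately show "(v + w, a + b) \<in> G0" by (simp add: algebra_simps)
  next
    fix v a and r :: real assume "(v, a) \<in> G0"
    then obtain a1 b1 where "v = a1 *\<^sub>R x + b1 *\<^sub>R y" "a = a1 * norm x"
      unfolding G0_def by blast
    moreover have "((r * a1) *\<^sub>R x + (r * b1) *\<^sub>R y, (r * a1) * norm x) \<in> G0"
      unfolding G0_def by blast
    ultimately show "(r *\<^sub>R v, r * a) \<in> G0" by (simp add: algebra_simps)
  next
    fix v a assume "(v, a) \<in> G0"
    then obtain a1 b1 where "v = a1 *\<^sub>R x + b1 *\<^sub>R y" "a = a1 * norm x"
      unfolding G0_def by blast
    with bj_orth_scaleR_le_norm[OF assms(2), of a1 b1] show "a \<le> norm v"
      by (metis abs_ge_self mult_right_mono norm_ge_zero order_trans)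
  qed
  moreover have "(1 *\<^sub>R x + 0 *\<^sub>R y, 1 * norm x) \<in> G0" "(0 *\<^sub>R x + 1 *\<^sub>R y, 0 * norm x) \<in> G0"
    unfolding G0_def by blast+
  then have x_in: "(x, norm x) \<in> G0" and y_in: "(y, 0) \<in> G0" by simp_all
  ultimately obtain f :: "'a \<Rightarrow>\<^sub>L real"
    where "norm f \<le> 1" and f_G0: "\<And>v a. (v, a) \<in> G0 \<Longrightarrow> blinfun_apply f v = a"
    using norm_dominated_graph_hahn_banach by blast
  moreover have "norm x \<le> norm f * norm x"
    using norm_blinfun[of f x] f_G0[OF x_in] by simp
  then have "1 \<le> norm f" using \<open>x \<noteq> 0\<close> by simp
  ultimately show ?thesis
    using that f_G0[OF x_in] f_G0[OF y_in] unfolding supp_funcs_def by auto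
qed

lemma square_diff_le_square:
  fixes N c B :: real
  assumes "0 \<le> N" "0 \<le> c" "N - c \<le> B"
  shows "N\<^sup>2 - 2 * N * c \<le> B\<^sup>2"
proof (cases "c \<le> N")
  case True
  then have "(N - c)\<^sup>2 \<le> B\<^sup>2" using assms by (intro power_mono) auto
  then show ?thesis by (simp add: power2_eq_square algebra_simps) (smt (verit) zero_le_square)
next
  case False
  then have "N * (N - 2 * c) \<le> 0" using assms by (intro mult_nonneg_nonpos) auto
  then show ?thesis by (simp add: power2_eq_square algebra_simps) (smt (verit) zero_le_square)
qed

lemma bj_orth_approx_supporting_functional:
  assumes g: "g \<in> supp_funcs x" and "0 \<le> \<delta>"
    and small: "\<bar>blinfun_apply g y\<bar> \<le> \<delta> * norm y"
  shows "bj_orth_approx \<delta> x y"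
  unfolding bj_orth_approx_def
proof
  fix t :: real
  have g_x: "norm g = 1" "blinfun_apply g x = norm x"
    using g unfolding supp_funcs_def by auto
  have "\<bar>t * blinfun_apply g y\<bar> \<le> \<delta> * norm (t *\<^sub>R y)"
    using mult_left_mono[OF small abs_ge_zero[of t]] by (simp add: abs_mult mult.left_commute)
  then have "norm x - \<delta> * norm (t *\<^sub>R y) \<le> norm x + t * blinfun_apply g y"
    by (simp add: abs_le_iff)
  also have "\<dots> = blinfun_apply g (x + t *\<^sub>R y)"
    using g_x by (simp add: blinfun.add_right blinfun.scaleR_right)
  also have "\<dots> \<le> norm (x + t *\<^sub>R y)"
    using norm_blinfun[of g "x + t *\<^sub>R y"] g_x by simp
  finally have "norm x - \<delta> * norm (t *\<^sub>R y) \<le> norm (x + t *\<^sub>R y)" .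
  from square_diff_le_square[OF norm_ge_zero _ this] \<open>0 \<le> \<delta>\<close>
  show "(norm (x + t *\<^sub>R y))\<^sup>2 \<ge> (norm x)\<^sup>2 - 2 * \<delta> * norm x * norm (t *\<^sub>R y)"
    by (simp add: algebra_simps)
qed

lemma vanishing_functionals_sum_bound:
  assumes "blinfun_apply f y1 = 0" "blinfun_apply g y2 = 0"
    and "norm (g - f) \<le> \<epsilon>" "0 \<le> \<epsilon>"
    and "norm y1 \<le> norm ((y1 + y2) /\<^sub>R 2)"
  shows "\<bar>blinfun_apply g (y1 + y2)\<bar> \<le> \<epsilon> / 2 * norm (y1 + y2)"
proof -
  have "blinfun_apply g (y1 + y2) = blinfun_apply (g - f) y1"
    using assms by (simp add: blinfun.add_right blinfun.diff_left)
  then have "\<bar>blinfun_apply g (y1 + y2)\<bar> \<le> norm (g - f) * norm y1"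
    using norm_blinfun[of "g - f" y1] by simp
  also have "\<dots> \<le> \<epsilon> * norm y1"
    using assms by (simp add: mult_right_mono)
  also have "\<dots> \<le> \<epsilon> * (norm (y1 + y2) / 2)"
    using assms by (intro mult_left_mono) auto
  finally show ?thesis by simp
qed

(* The hypothesis \<epsilon> < 2 only makes \<epsilon>/2 a legitimate parameter in [0, 1); the proof does not use it. *)
theorem theorem4p6:
  fixes x y1 y2 :: "'a::real_normed_vector" and \<epsilon> :: real
  assumes "x \<noteq> 0"
    and "0 \<le> \<epsilon>" and "\<epsilon> < 2"
    and "eps_smooth \<epsilon> x"
    and "min (norm y1) (norm y2) \<le> norm ((y1 + y2) /\<^sub>R 2)"
    and "bj_orth x y1" and "bj_orth x y2"
  shows "bj_orth_approx (\<epsilon> / 2) x (y1 + y2)"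
proof -
  obtain f where f: "f \<in> supp_funcs x" "blinfun_apply f y1 = 0"
    using bj_orth_supporting_functional assms(1,6) by blast
  obtain g where g: "g \<in> supp_funcs x" "blinfun_apply g y2 = 0"
    using bj_orth_supporting_functional assms(1,7) by blast
  have gf: "norm (g - f) \<le> \<epsilon>" and fg: "norm (f - g) \<le> \<epsilon>"
    using assms(4) f g unfolding eps_smooth_def by auto
  show ?thesis
  proof (cases "norm y1 \<le> norm ((y1 + y2) /\<^sub>R 2)")
    case True
    then have "\<bar>blinfun_apply g (y1 + y2)\<bar> \<le> \<epsilon> / 2 * norm (y1 + y2)"
      by (rule vanishing_functionals_sum_bound[OF f(2) g(2) gf assms(2)])
    then show ?thesis
      by (rule bj_orth_approx_supporting_functional[OF g(1), rotated]) (use assms(2) in simp)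
  next
    case False
    then have "norm y2 \<le> norm ((y2 + y1) /\<^sub>R 2)"
      using assms(5) by (simp add: add.commute)
    then have "\<bar>blinfun_apply f (y2 + y1)\<bar> \<le> \<epsilon> / 2 * norm (y2 + y1)"
      by (rule vanishing_functionals_sum_bound[OF g(2) f(2) fg assms(2)])
    then have "bj_orth_approx (\<epsilon> / 2) x (y2 + y1)"
      by (rule bj_orth_approx_supporting_functional[OF f(1), rotated]) (use assms(2) in simp)
    then show ?thesis by (simp add: add.commute)
  qed
qed

end
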